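(* In the MLR-DMPC setting described in the context, let $w\neq v$ be two CUs, $i\in\mathcal A$ a UAV and $k$ a round. If after executing the information-tracker update procedure of round $k$ the trackers $\mathcal D_{iw}(k)$ and $\mathcal D_{iv}(k)$ are both not deprecated, then $\mathcal D_{iw}(k)=\mathcal D_{iv}(k)$.
   Context: Setting (MLR-DMPC). There are $N$ UAVs indexed by $\mathcal A=\{1,\dots,N\}$ and $M$ compute units (CUs) indexed by $w\in\{1,\dots,M\}$, $1<M<N$. Time is divided into rounds $k=0,1,2,\dots$ of length $T>0$; each round consists of a computation phase followed by a communication phase in which every device broadcasts at most one message; any message may be lost at any receiver (arbitrary message loss). Nominal model: each UAV $i$ has a nominal system $\dot{\hat x}_i=\hat f_i(\hat x_i,\hat u_i)$, $\hat x_i\in\hat{\mathcal X}$, $\hat u_i\in\hat{\mathcal U}$, with nominal position $\hat p_i=\hat g_{p,i}(\hat x_i)\in\mathbb R^3$. Reference trajectories: in round $k$ UAV $i$ follows a reference $\hat x_i(\tau|k),\hat u_i(\tau|k)$, $\tau\ge 0$, applied at time $t=kT+\tau$. If in the communication phase of round $k$ UAV $i$ receives a trajectory $\hat u_{i,w}(\cdot|k)$ computed by CU $w$, then $\hat u_i(\tau|k+1)=\hat u_{i,w}(\tau+T|k)$; otherwise $\hat u_i(\tau|k+1)=\hat u_i(\tau+T|k)$. Each UAV broadcasts a message containing the metadata (computing CU and round) of the trajectory it currently follows. Information trackers: each CU $w$ keeps, for each UAV $i$, a set $\mathcal D_{iw}(k)$ of candidate trajectories (with metadata) together with a flag up-to-date/deprecated;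 elements are written $\tilde x_i(\cdot|k-1)$, $\tilde p_i(\cdot|k-1)$. Initially all trackers are empty and deprecated. At the start of round $k$, CU $w$ updates using the messages received in round $k-1$: (1) start from $\mathcal D_{iw}(k-1)$; for every UAV $i$ whose message was received, replace its tracker by the single stored trajectory whose metadata matches and mark that tracker up-to-date; (2) if some tracker then has more than one element, mark all trackers deprecated; (3) if fewer than $M$ CU messages were received, mark all trackers deprecated; (4) for every received CU message containing a newly computed trajectory for a UAV $i$, add it to $\mathcal D_{iw}(k)$. If all trackers are up-to-date, the CU runs a DMPC step: all such CUs compute the same set $\mathcal A_{ET}(k)$ of $M$ UAVs (highest priorities after max-consensus), CU $w$ selects the UAV at position $(k+w)\bmod M$ of $\mathcal A_{ET}(k)$ and, if that UAV's tracker has exactly one element, computes and broadcasts a new trajectory for it. Otherwise the CU is in message-loss-recovery mode: it computes no trajectory and instead (in alternate rounds) requests a UAV with a deprecated tracker to rebroadcast its current reference trajectory with metadata. *)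

theory Defs
  imports Main
begin

text \<open>
  UAVs are 1..N, CUs are 1..M.  A (reference) trajectory is represented by the
  trajectory as originally computed (type 'tr, abstract) together with its
  metadata: Some (w, k) = computed by CU w in round k, None = the initial
  reference of the UAV.  The time shift by T per round is applied identically
  to every stored/followed trajectory, so it is left implicit.
\<close>

type_synonym meta = "(nat \<times> nat) option"
type_synonym 'tr cand = "'tr \<times> meta"

text \<open>Parameters of a run: sizes, initial references, the outputs of the
  optimisation problems (sol k w = trajectory CU w would compute in round k),
  the common sets A_ET(k) (as lists, position p = index p), the recovery
  requests chosen by CUs, and arbitrary message reception (message loss).\<close>
record 'tr mlr_sys =
  nU :: nat
  nC :: nat
  init_ref :: "nat \<Rightarrow> 'tr"
  sol :: "nat \<Rightarrow> nat \<Rightarrow> 'tr"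
  aet :: "nat \<Rightarrow> nat list"
  req :: "nat \<Rightarrow> nat \<Rightarrow> nat option"
  rcv_uav :: "nat \<Rightarrow> nat \<Rightarrow> nat \<Rightarrow> bool"     \<comment> \<open>k i w: in round k CU w receives the message of UAV i\<close>
  rcv_cu :: "nat \<Rightarrow> nat \<Rightarrow> nat \<Rightarrow> bool"      \<comment> \<open>k v w: in round k CU w receives the message of CU v\<close>
  rcv_cu_uav :: "nat \<Rightarrow> nat \<Rightarrow> nat \<Rightarrow> bool"  \<comment> \<open>k w i: in round k UAV i receives the message of CU w\<close>

record 'tr mlr_state =
  ref :: "nat \<Rightarrow> 'tr cand"
  trk :: "nat \<Rightarrow> nat \<Rightarrow> 'tr cand set"
  upd :: "nat \<Rightarrow> nat \<Rightarrow> bool"          \<comment> \<open>upd i w: D_iw is up-to-date (else deprecated)\<close>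
  rebc :: "nat \<Rightarrow> bool"                 \<comment> \<open>UAV i rebroadcasts its reference this round (was requested)\<close>

definition UAVs :: "'tr mlr_sys \<Rightarrow> nat set" where
  "UAVs S = {1..nU S}"

definition CUs :: "'tr mlr_sys \<Rightarrow> nat set" where
  "CUs S = {1..nC S}"

definition valid_sys :: "'tr mlr_sys \<Rightarrow> bool" where
  "valid_sys S \<longleftrightarrow> 1 < nC S \<and> nC S < nU S \<and>
     (\<forall>k. distinct (aet S k) \<and> length (aet S k) = nC S \<and> set (aet S k) \<subseteq> UAVs S)"

definition dmpc_mode :: "'tr mlr_sys \<Rightarrow> ('tr, 'b) mlr_state_scheme \<Rightarrow> nat \<Rightarrow> bool" where
  "dmpc_mode S st w \<longleftrightarrow> (\<forall>i\<in>UAVs S. upd st i w)"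

definition computed :: "'tr mlr_sys \<Rightarrow> nat \<Rightarrow> 'tr mlr_state \<Rightarrow> nat \<Rightarrow> (nat \<times> 'tr) option" where
  "computed S k st w =
     (if dmpc_mode S st w then
        (let i = aet S k ! ((k + w) mod nC S) in
           if card (trk st i w) = 1 then Some (i, sol S k w) else None)
      else None)"

definition request :: "'tr mlr_sys \<Rightarrow> nat \<Rightarrow> 'tr mlr_state \<Rightarrow> nat \<Rightarrow> nat option" where
  "request S k st w =
     (if dmpc_mode S st w then None
      else (case req S k w of
              Some j \<Rightarrow> if j \<in> UAVs S \<and> \<not> upd st j w then Some j else None
            | None \<Rightarrow> None))"

definition step :: "'tr mlr_sys \<Rightarrow> nat \<Rightarrow> 'tr mlr_state \<Rightarrow> 'tr mlr_state" where
  "step S k st =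
    (let comp = computed S k st;
         reqs = request S k st;
         got = (\<lambda>i w. w \<in> CUs S \<and> rcv_cu_uav S k w i \<and> (\<exists>x. comp w = Some (i, x)));
         new_ref = (\<lambda>i. if (\<exists>w. got i w)
                         then (let w = (LEAST w. got i w) in (sol S k w, Some (w, k)))
                         else ref st i);
         new_rebc = (\<lambda>i. \<exists>w\<in>CUs S. rcv_cu_uav S k w i \<and> reqs w = Some i);
         \<comment> \<open>(1) received UAV messages\<close>
         D1 = (\<lambda>i w. if rcv_uav S k i w
                      then (if rebc st i then {ref st i}
                            else {d \<in> trk st i w. snd d = snd (ref st i)})
                      else trk st i w);
         U1 = (\<lambda>i w. if rcv_uav S k i w then D1 i w \<noteq> {} else upd st i w);
         \<comment> \<open>(2) some tracker with more than one element\<close>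
         dep2 = (\<lambda>w. \<exists>i\<in>UAVs S. card (D1 i w) > 1);
         \<comment> \<open>(3) fewer than M CU messages received\<close>
         dep3 = (\<lambda>w. card {v \<in> CUs S. rcv_cu S k v w} < nC S);
         \<comment> \<open>(4) add received newly computed trajectories\<close>
         D = (\<lambda>i w. D1 i w \<union> {(x, Some (v, k)) | v x. v \<in> CUs S \<and> rcv_cu S k v w \<and> comp v = Some (i, x)})
     in \<lparr>ref = new_ref, trk = D, upd = (\<lambda>i w. U1 i w \<and> \<not> dep2 w \<and> \<not> dep3 w), rebc = new_rebc\<rparr>)"

text \<open>State in round k, after the tracker update at the start of round k.\<close>
primrec run :: "'tr mlr_sys \<Rightarrow> nat \<Rightarrow> 'tr mlr_state" where
  "run S 0 = \<lparr>ref = (\<lambda>i. (init_ref S i, None)), trk = (\<lambda>i w. {}), upd = (\<lambda>i w. False), rebc = (\<lambda>i. False)\<rparr>"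
| "run S (Suc k) = step S k (run S k)"

end

theory Submission
  imports Defs
begin

text \<open>
  A tracker only ever contains candidates whose trajectory is the one named by their metadata,
  so filtering by the metadata a UAV announces leaves at most its own reference.  An up-to-date
  tracker therefore saw every CU message of the previous round and, after the UAV filter, holds
  exactly the UAV's previous reference plus all trajectories newly computed for it in that
  round -- a set that does not depend on the CU.  Since the UAV's new reference is one of these
  candidates, an up-to-date tracker also contains it, which handles rounds in which the UAV's
  own message is lost.
\<close>

definition consistent_cand :: "'tr mlr_sys \<Rightarrow> nat \<Rightarrow> 'tr cand \<Rightarrow> bool" where
  "consistent_cand S i d \<longleftrightarrow>
     fst d = (case snd d of None \<Rightarrow> init_ref S i | Some (v, k) \<Rightarrow> sol S k v)"

definition computed_cands :: "'tr mlr_sys \<Rightarrow> nat \<Rightarrow> 'tr mlr_state \<Rightarrow> nat \<Rightarrow> 'tr cand set" where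
  "computed_cands S k st i =
     {(x, Some (v, k)) | v x. v \<in> CUs S \<and> computed S k st v = Some (i, x)}"

definition trk_uav_filtered :: "'tr mlr_sys \<Rightarrow> nat \<Rightarrow> 'tr mlr_state \<Rightarrow> nat \<Rightarrow> nat \<Rightarrow> 'tr cand set" where
  "trk_uav_filtered S k st i w =
     (if rcv_uav S k i w
      then (if rebc st i then {ref st i} else {d \<in> trk st i w. snd d = snd (ref st i)})
      else trk st i w)"

lemma trk_step:
  "trk (step S k st) i w = trk_uav_filtered S k st i w \<union>
     {(x, Some (v, k)) | v x. v \<in> CUs S \<and> rcv_cu S k v w \<and> computed S k st v = Some (i, x)}"
  by (simp add: step_def Let_def trk_uav_filtered_def)

lemma upd_step:
  "upd (step S k st) i w \<longleftrightarrow>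
     (if rcv_uav S k i w then trk_uav_filtered S k st i w \<noteq> {} else upd st i w) \<and>
     \<not> (\<exists>j\<in>UAVs S. card (trk_uav_filtered S k st j w) > 1) \<and>
     \<not> card {v \<in> CUs S. rcv_cu S k v w} < nC S"
  by (simp add: step_def Let_def trk_uav_filtered_def)

lemma computed_eq_sol: "computed S k st v = Some (i, x) \<Longrightarrow> x = sol S k v"
  by (simp add: computed_def Let_def split: if_splits)

lemma ref_step_mem: "ref (step S k st) i \<in> insert (ref st i) (computed_cands S k st i)"
proof -
  let ?got = "\<lambda>w. w \<in> CUs S \<and> rcv_cu_uav S k w i \<and> (\<exists>x. computed S k st w = Some (i, x))"
  show ?thesis
  proof (cases "\<exists>w. ?got w")
    case True
    let ?w = "LEAST w. ?got w"
    have "?got ?w" using True by (rule LeastI_ex)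
    then obtain x where "?w \<in> CUs S" and x: "computed S k st ?w = Some (i, x)" by blast
    then have "(x, Some (?w, k)) \<in> computed_cands S k st i"
      unfolding computed_cands_def by blast
    moreover have "ref (step S k st) i = (x, Some (?w, k))"
      using True computed_eq_sol[OF x] by (simp add: step_def Let_def)
    ultimately show ?thesis by simp
  next
    case False
    then have "ref (step S k st) i = ref st i"
      unfolding step_def Let_def by (simp only: mlr_state.simps if_False)
    then show ?thesis by simp
  qed
qed

lemma finite_computed_cands: "finite (computed_cands S k st i)"
proof -
  have "computed_cands S k st i \<subseteq> (\<lambda>v. (sol S k v, Some (v, k))) ` CUs S"
    unfolding computed_cands_def using computed_eq_sol by fastforce
  then show ?thesis by (rule finite_subset) (simp add: CUs_def)
qed

lemma run_consistent:
  "consistent_cand S i (ref (run S k) i) \<and> (\<forall>w. \<forall>d\<in>trk (run S k) i w. consistent_cand S i d)"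
proof (induction k)
  case 0
  then show ?case by (simp add: consistent_cand_def)
next
  case (Suc k)
  have computed_consistent: "\<forall>d\<in>computed_cands S k (run S k) i. consistent_cand S i d"
    by (auto simp: computed_cands_def consistent_cand_def dest: computed_eq_sol)
  have "consistent_cand S i (ref (step S k (run S k)) i)"
    using ref_step_mem[of S k "run S k" i] Suc computed_consistent by (metis insertE)
  moreover have "\<forall>w. \<forall>d\<in>trk (step S k (run S k)) i w. consistent_cand S i d"
    using Suc computed_consistent
    unfolding trk_step trk_uav_filtered_def computed_cands_def by auto
  ultimately show ?case by simp
qed

lemma upd_step_imp_rcv_cu:
  assumes "upd (step S k st) i w" and "v \<in> CUs S"
  shows "rcv_cu S k v w"
proof -
  have fin: "finite (CUs S)" and card: "card (CUs S) = nC S" by (simp_all add: CUs_def)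
  have "\<not> card {v \<in> CUs S. rcv_cu S k v w} < nC S"
    using assms(1) unfolding upd_step by blast
  then have "{v \<in> CUs S. rcv_cu S k v w} = CUs S"
    using card_seteq[OF fin, of "{v \<in> CUs S. rcv_cu S k v w}"] card by auto
  then show ?thesis using assms(2) by blast
qed

lemma trk_uav_filtered_eq_ref:
  assumes "i \<in> UAVs S" and "upd (step S k st) i w"
    and ref_cons: "consistent_cand S i (ref st i)"
    and trk_cons: "\<forall>d\<in>trk st i w. consistent_cand S i d"
    and tracks_ref: "upd st i w \<Longrightarrow> finite (trk st i w) \<and> ref st i \<in> trk st i w"
  shows "trk_uav_filtered S k st i w = {ref st i}"
proof -
  have nonempty: "if rcv_uav S k i w then trk_uav_filtered S k st i w \<noteq> {} else upd st i w"
    and single: "card (trk_uav_filtered S k st i w) \<le> Suc 0"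
    using assms(2) unfolding upd_step using assms(1) by (blast, force)
  show ?thesis
  proof (cases "rcv_uav S k i w")
    case True
    have "trk_uav_filtered S k st i w \<subseteq> {ref st i}"
      \<comment> \<open>candidates with the announced metadata carry the reference's trajectory\<close>
      using True trk_cons ref_cons
      by (auto simp: trk_uav_filtered_def consistent_cand_def prod_eq_iff)
    with True nonempty show ?thesis by (simp add: subset_singleton_iff)
  next
    case False
    then have filtered: "trk_uav_filtered S k st i w = trk st i w" and "upd st i w"
      using nonempty by (simp_all add: trk_uav_filtered_def)
    with tracks_ref have fin: "finite (trk st i w)" and mem: "ref st i \<in> trk st i w" by simp_all
    have "card (trk st i w) \<le> Suc 0" using single filtered by simp
    then have "\<forall>a\<in>trk st i w. \<forall>b\<in>trk st i w. a = b" using card_le_Suc0_iff_eq[OF fin] by blast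
    with mem filtered show ?thesis by blast
  qed
qed

lemma trk_step_if_upd:
  assumes "i \<in> UAVs S" and "upd (step S k st) i w"
    and "consistent_cand S i (ref st i)"
    and "\<forall>d\<in>trk st i w. consistent_cand S i d"
    and "upd st i w \<Longrightarrow> finite (trk st i w) \<and> ref st i \<in> trk st i w"
  shows "trk (step S k st) i w = insert (ref st i) (computed_cands S k st i)"
  using trk_uav_filtered_eq_ref[OF assms] upd_step_imp_rcv_cu[OF assms(2)]
  unfolding trk_step computed_cands_def by auto

lemma trk_run_Suc_if_upd:
  assumes "i \<in> UAVs S" and "upd (run S (Suc k)) i w"
  shows "trk (run S (Suc k)) i w = insert (ref (run S k) i) (computed_cands S k (run S k) i)"
  using assms
proof (induction k arbitrary: w)
  case 0
  then show ?case using run_consistent[of S i 0]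
    by (simp only: run.simps(2)) (rule trk_step_if_upd, auto)
next
  case (Suc k w)
  let ?st = "run S (Suc k)"
  have "finite (trk ?st i w) \<and> ref ?st i \<in> trk ?st i w" if "upd ?st i w"
    using Suc.IH[OF Suc.prems(1) that] ref_step_mem[of S k "run S k" i]
      finite_computed_cands[of S k "run S k" i]
    by simp
  then show ?case using Suc.prems run_consistent[of S i "Suc k"]
    by (simp only: run.simps(2)[of S "Suc k"]) (rule trk_step_if_upd, auto)
qed

theorem lemma2:
  fixes S :: "'tr mlr_sys" and w v i k :: nat
  assumes "valid_sys S"
    and "w \<in> CUs S" and "v \<in> CUs S" and "w \<noteq> v"
    and "i \<in> UAVs S"
    and "upd (run S k) i w" and "upd (run S k) i v"
  shows "trk (run S k) i w = trk (run S k) i v"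
proof (cases k)
  case 0
  with assms(6) show ?thesis by simp
next
  case (Suc k')
  with assms(5-7) show ?thesis by (simp only: trk_run_Suc_if_upd)
qed

end
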